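(* Let $\mu>0$, $\beta\in[0,1]$, $x_0\in\mathbb R^n$, and $f\in\mathcal S^2_{\mu,L}(\mathbb R^n)$ for some $L\ge\mu$. For $s>0$ let $X_s$ be the solution of the $\beta$-High Resolution ODE $$\ddot X_s+2\sqrt\mu\,\dot X_s+\beta\sqrt s\,\nabla^2 f(X_s)\dot X_s+(1+\sqrt{\mu s})\nabla f(X_s)=0,\quad X_s(0)=x_0,\ \dot X_s(0)=-\frac{2\sqrt s\,\nabla f(x_0)}{1+\sqrt{\mu s}},$$ and let $X$ be the solution of the low-resolution ODE $$\ddot X+2\sqrt\mu\,\dot X+\nabla f(X)=0,\quad X(0)=x_0,\ \dot X(0)=0.$$ Then for every $T>0$, $$\lim_{s\to 0}\max_{0\le t\le T}\|X_s(t)-X(t)\|=0.$$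
   Context: $\mathcal S^2_{\mu,L}(\mathbb R^n)$ is the class of twice differentiable, $\mu$-strongly convex functions $f:\mathbb R^n\to\mathbb R$ (i.e. $f(y)\ge f(x)+\langle\nabla f(x),y-x\rangle+\frac\mu2\|y-x\|^2$) whose gradient is $L$-Lipschitz and whose Hessian is Lipschitz in Frobenius norm ($\|\nabla^2f(x)-\nabla^2f(y)\|_F\le L'\|x-y\|$ for some $L'>0$), with $0<\mu\le L$. *)

theory Defs
  imports "HOL-Analysis.Analysis"
begin

text \<open>Points of R^n are vectors real^'n. The gradient of f is G, the Hessian is the
  matrix-valued function H (norm on real^'n^'n is the Frobenius norm).\<close>

definition is_gradient :: "(real^'n \<Rightarrow> real) \<Rightarrow> (real^'n \<Rightarrow> real^'n) \<Rightarrow> bool" where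
  "is_gradient f G \<longleftrightarrow> (\<forall>x. (f has_derivative (\<lambda>h. G x \<bullet> h)) (at x))"

definition is_hessian :: "(real^'n \<Rightarrow> real^'n) \<Rightarrow> (real^'n \<Rightarrow> real^'n^'n) \<Rightarrow> bool" where
  "is_hessian G H \<longleftrightarrow> (\<forall>x. (G has_derivative (\<lambda>h. H x *v h)) (at x))"

definition S2_class :: "real \<Rightarrow> real \<Rightarrow> (real^'n \<Rightarrow> real) \<Rightarrow> (real^'n \<Rightarrow> real^'n)
    \<Rightarrow> (real^'n \<Rightarrow> real^'n^'n) \<Rightarrow> bool" where
  "S2_class \<mu> L f G H \<longleftrightarrow>
     0 < \<mu> \<and> \<mu> \<le> L \<and> is_gradient f G \<and> is_hessian G H \<and>
     (\<forall>x y. f y \<ge> f x + G x \<bullet> (y - x) + \<mu> / 2 * (norm (y - x))\<^sup>2) \<and>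
     (\<forall>x y. norm (G x - G y) \<le> L * norm (x - y)) \<and>
     (\<exists>L'>0. \<forall>x y. norm (H x - H y) \<le> L' * norm (x - y))"

end

theory Submission
  imports Defs
begin

text \<open>Along a high-resolution trajectory the acceleration equals the low-resolution vector field
  plus \<open>sqrt s\<close> times a correction term, and the correction is bounded as long as the trajectory
  is. A first Gronwall argument bounds the high-resolution trajectories on \<open>[0, T]\<close> uniformly
  in \<open>s \<in> (0, 1)\<close>; a second one, applied to the difference of the two trajectories, whose
  initial velocities also differ by \<open>O(sqrt s)\<close>, yields \<open>\<parallel>X\<^sub>s(t) - X(t)\<parallel> \<le> D sqrt s\<close> on
  \<open>[0, T]\<close>. Only the Lipschitz bound \<open>L\<close> on the gradient, and hence on the Hessian, enters.\<close>

lemma gronwall_affine_less: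
  fixes Z Z' :: "real \<Rightarrow> 'a::real_normed_vector"
  assumes "C > 0"
    and deriv: "\<And>t. 0 \<le> t \<Longrightarrow> t \<le> T \<Longrightarrow> (Z has_vector_derivative Z' t) (at t within {0..})"
    and growth: "\<And>t. 0 \<le> t \<Longrightarrow> t \<le> T \<Longrightarrow> norm (Z' t) \<le> C * norm (Z t) + k"
    and init: "norm (Z 0) < a"
    and t: "0 \<le> t" "t \<le> T"
  shows "norm (Z t) < (a + k/C) * exp (C*t) - k/C"
proof (rule ccontr)
  define \<phi> where "\<phi> = (\<lambda>t. (a + k/C) * exp (C*t) - k/C)"
  have \<phi>_0: "\<phi> 0 = a" by (simp add: \<phi>_def)
  have \<phi>_deriv: "(\<phi> has_vector_derivative C * \<phi> x + k) (at x)" for x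
    unfolding \<phi>_def has_real_derivative_iff_has_vector_derivative[symmetric]
    using \<open>C > 0\<close> by (auto intro!: derivative_eq_intros simp: field_simps)
  have cont_\<phi>: "continuous_on S \<phi>" for S unfolding \<phi>_def by (intro continuous_intros)
  have cont_Z: "continuous_on {0..T} Z"
    unfolding continuous_on_eq_continuous_within
    by (auto intro!: has_vector_derivative_continuous has_vector_derivative_within_subset[OF deriv])
  \<comment> \<open>\<open>u\<close> is the first time at which \<open>norm (Z u)\<close> catches up with the comparison function \<open>\<phi>\<close>\<close>
  define S where "S = {x \<in> {0..T}. \<phi> x \<le> norm (Z x)}"
  assume "\<not> ?thesis"
  then have "t \<in> S" using t by (simp add: S_def \<phi>_def)
  moreover have "closed S" unfolding S_def
    by (intro continuous_on_closed_Collect_le cont_\<phi> continuous_on_norm cont_Z) auto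
  moreover have "bdd_below S" unfolding S_def by (rule bdd_belowI[of _ 0]) auto
  ultimately have "Inf S \<in> S" by (intro closed_contains_Inf) auto
  define u where "u = Inf S"
  have u: "0 \<le> u" "u \<le> T" "\<phi> u \<le> norm (Z u)" using \<open>Inf S \<in> S\<close> by (auto simp: u_def S_def)
  have below: "norm (Z x) < \<phi> x" if "0 \<le> x" "x < u" for x
  proof (rule ccontr)
    assume "\<not> ?thesis"
    then have "x \<in> S" using that u by (auto simp: S_def)
    then have "u \<le> x" unfolding u_def using \<open>bdd_below S\<close> by (rule cInf_lower)
    then show False using that by simp
  qed
  have "u > 0" using u init \<phi>_0 by (cases "u = 0") auto
  have "norm (Z u - Z 0) \<le> \<phi> u - \<phi> 0"
  proof (rule differentiable_bound_general[OF \<open>u > 0\<close>, where f' = Z' and \<phi>' = "\<lambda>x. C * \<phi> x + k"])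
    show "continuous_on {0..u} Z" using u by (intro continuous_on_subset[OF cont_Z]) auto
    show "continuous_on {0..u} \<phi>" by (rule cont_\<phi>)
    fix x assume x: "0 < x" "x < u"
    have "(Z has_vector_derivative Z' x) (at x within {0<..})"
      using deriv[of x] x u by (auto intro: has_vector_derivative_within_subset)
    then show "(Z has_vector_derivative Z' x) (at x)"
      using has_vector_derivative_within_open[of x "{0<..}"] x by auto
    show "(\<phi> has_vector_derivative C * \<phi> x + k) (at x)" by (rule \<phi>_deriv)
    have "norm (Z' x) \<le> C * norm (Z x) + k" using growth x u by auto
    also have "\<dots> \<le> C * \<phi> x + k" using below[of x] x \<open>C > 0\<close> by auto
    finally show "norm (Z' x) \<le> C * \<phi> x + k" .
  qed
  then show False using u init \<phi>_0 norm_triangle_ineq2[of "Z u" "Z 0"] by linarith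
qed

lemma gronwall_affine_le:
  fixes Z Z' :: "real \<Rightarrow> 'a::real_normed_vector"
  assumes "C > 0" "k \<ge> 0"
    and deriv: "\<And>t. 0 \<le> t \<Longrightarrow> t \<le> T \<Longrightarrow> (Z has_vector_derivative Z' t) (at t within {0..})"
    and growth: "\<And>t. 0 \<le> t \<Longrightarrow> t \<le> T \<Longrightarrow> norm (Z' t) \<le> C * norm (Z t) + k"
    and init: "norm (Z 0) \<le> a"
    and t: "0 \<le> t" "t \<le> T"
  shows "norm (Z t) \<le> (a + k/C) * exp (C*T)"
proof (rule field_le_epsilon)
  fix e :: real assume "e > 0"
  define \<delta> where "\<delta> = e / exp (C*T)"
  have "\<delta> > 0" using \<open>e > 0\<close> by (simp add: \<delta>_def)
  have "norm (Z t) < (a + \<delta> + k/C) * exp (C*t) - k/C"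
    using gronwall_affine_less[OF \<open>C > 0\<close> deriv growth _ t] init \<open>\<delta> > 0\<close> by simp
  also have "\<dots> \<le> (a + \<delta> + k/C) * exp (C*T)"
  proof -
    have "0 \<le> a" using init norm_ge_zero[of "Z 0"] by linarith
    then have "0 \<le> a + \<delta> + k/C" using \<open>\<delta> > 0\<close> assms(1,2) by simp
    moreover have "exp (C*t) \<le> exp (C*T)" using t \<open>C > 0\<close> by simp
    ultimately have "(a + \<delta> + k/C) * exp (C*t) \<le> (a + \<delta> + k/C) * exp (C*T)"
      by (simp add: mult_left_mono)
    moreover have "k/C \<ge> 0" using assms(1,2) by simp
    ultimately show ?thesis by linarith
  qed
  also have "\<dots> = (a + k/C) * exp (C*T) + e" by (simp add: \<delta>_def algebra_simps)
  finally show "norm (Z t) \<le> (a + k/C) * exp (C*T) + e" by simp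
qed

lemma tendsto_SUP_norm_zero:
  fixes g :: "'b \<Rightarrow> 'c \<Rightarrow> 'a::real_normed_vector"
  assumes "S \<noteq> {}"
    and bound: "eventually (\<lambda>s. \<forall>t\<in>S. norm (g s t) \<le> b s) F"
    and "(b \<longlongrightarrow> 0) F"
  shows "((\<lambda>s. SUP t\<in>S. norm (g s t)) \<longlongrightarrow> 0) F"
proof (rule tendsto_sandwich[OF _ _ tendsto_const \<open>(b \<longlongrightarrow> 0) F\<close>])
  have "0 \<le> (SUP t\<in>S. norm (g s t)) \<and> (SUP t\<in>S. norm (g s t)) \<le> b s"
    if "\<forall>t\<in>S. norm (g s t) \<le> b s" for s
  proof
    have "bdd_above ((\<lambda>t. norm (g s t)) ` S)" using that by (intro bdd_aboveI2) auto
    then show "0 \<le> (SUP t\<in>S. norm (g s t))"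
      using \<open>S \<noteq> {}\<close> by (auto intro: cSUP_upper2)
    show "(SUP t\<in>S. norm (g s t)) \<le> b s" using \<open>S \<noteq> {}\<close> that by (simp add: cSUP_least)
  qed
  then show "eventually (\<lambda>s. 0 \<le> (SUP t\<in>S. norm (g s t))) F"
    and "eventually (\<lambda>s. (SUP t\<in>S. norm (g s t)) \<le> b s) F"
    using bound by (auto elim: eventually_mono)
qed

lemma has_derivative_norm_le_lipschitz:
  fixes G :: "'a::real_normed_vector \<Rightarrow> 'b::real_normed_vector"
  assumes der: "(G has_derivative D) (at x)"
    and lip: "\<And>x y. norm (G x - G y) \<le> L * norm (x - y)"
  shows "norm (D v) \<le> L * norm v"
proof (cases "v = 0")
  case True
  then show ?thesis using has_derivative_linear[OF der] linear_0 by fastforce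
next
  case False
  then have "norm v > 0" by simp
  show ?thesis
  proof (rule field_le_epsilon)
    fix e :: real assume "e > 0"
    obtain d where "d > 0" and d: "\<And>y. norm (y - x) < d \<Longrightarrow>
        norm (G y - G x - D (y - x)) \<le> (e / norm v) * norm (y - x)"
      using der[unfolded has_derivative_at_alt] \<open>e > 0\<close> \<open>norm v > 0\<close> by (meson divide_pos_pos)
    define c where "c = d / (2 * norm v)"
    have "c > 0" using \<open>d > 0\<close> \<open>norm v > 0\<close> by (simp add: c_def)
    have "norm ((x + c *\<^sub>R v) - x) < d" using \<open>d > 0\<close> \<open>norm v > 0\<close> by (simp add: c_def)
    then have "norm (G (x + c *\<^sub>R v) - G x - c *\<^sub>R D v) \<le> e * c"
      using d[of "x + c *\<^sub>R v"] \<open>c > 0\<close> \<open>norm v > 0\<close> linear_scale[OF has_derivative_linear[OF der]]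
      by simp
    moreover have "norm (G (x + c *\<^sub>R v) - G x) \<le> L * (c * norm v)"
      using lip[of "x + c *\<^sub>R v" x] \<open>c > 0\<close> by simp
    moreover have "norm (c *\<^sub>R D v) \<le> norm (G (x + c *\<^sub>R v) - G x)
        + norm (G (x + c *\<^sub>R v) - G x - c *\<^sub>R D v)"
      using norm_triangle_ineq4[of "G (x + c *\<^sub>R v) - G x" "G (x + c *\<^sub>R v) - G x - c *\<^sub>R D v"]
      by simp
    ultimately have "c * norm (D v) \<le> c * (L * norm v + e)"
      using \<open>c > 0\<close> by (simp add: algebra_simps)
    then show "norm (D v) \<le> L * norm v + e" using \<open>c > 0\<close> by simp
  qed
qed

locale hr_lr_comparison =
  fixes \<mu> \<beta> L :: real and G :: "real^'n \<Rightarrow> real^'n" and H :: "real^'n \<Rightarrow> real^'n^'n"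
    and x0 :: "real^'n" and X V A :: "real \<Rightarrow> real \<Rightarrow> real^'n" and Y W B :: "real \<Rightarrow> real^'n"
  assumes mu_pos: "\<mu> > 0" and beta: "0 \<le> \<beta>" "\<beta> \<le> 1" and L_pos: "L > 0"
    and G_lipschitz: "\<And>x y. norm (G x - G y) \<le> L * norm (x - y)"
    and H_bound: "\<And>x v. norm (H x *v v) \<le> L * norm v"
    and HR: "\<And>s t. s > 0 \<Longrightarrow> t \<ge> 0 \<Longrightarrow>
           (X s has_vector_derivative V s t) (at t within {0..}) \<and>
           (V s has_vector_derivative A s t) (at t within {0..}) \<and>
           A s t + (2 * sqrt \<mu>) *\<^sub>R V s t + (\<beta> * sqrt s) *\<^sub>R (H (X s t) *v V s t)
             + (1 + sqrt (\<mu> * s)) *\<^sub>R G (X s t) = 0"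
    and HR_init: "\<And>s. s > 0 \<Longrightarrow> X s 0 = x0 \<and>
           V s 0 = - ((2 * sqrt s) / (1 + sqrt (\<mu> * s))) *\<^sub>R G x0"
    and LR: "\<And>t. t \<ge> 0 \<Longrightarrow>
           (Y has_vector_derivative W t) (at t within {0..}) \<and>
           (W has_vector_derivative B t) (at t within {0..}) \<and>
           B t + (2 * sqrt \<mu>) *\<^sub>R W t + G (Y t) = 0"
    and LR_init: "Y 0 = x0" "W 0 = 0"
begin

definition lr_field :: "real^'n \<Rightarrow> real^'n \<Rightarrow> real^'n" where
  "lr_field x v = - ((2 * sqrt \<mu>) *\<^sub>R v + G x)"

definition hr_correction :: "real^'n \<Rightarrow> real^'n \<Rightarrow> real^'n" where
  "hr_correction x v = \<beta> *\<^sub>R (H x *v v) + sqrt \<mu> *\<^sub>R G x"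

lemma HR_acceleration:
  assumes "s > 0" "t \<ge> 0"
  shows "A s t = lr_field (X s t) (V s t) - sqrt s *\<^sub>R hr_correction (X s t) (V s t)"
proof -
  have "A s t = - ((2 * sqrt \<mu>) *\<^sub>R V s t + (\<beta> * sqrt s) *\<^sub>R (H (X s t) *v V s t)
      + (1 + sqrt (\<mu> * s)) *\<^sub>R G (X s t))"
    using HR[OF assms] by (intro eq_neg_iff_add_eq_0[THEN iffD2]) (simp add: add.assoc)
  then show ?thesis by (simp add: lr_field_def hr_correction_def real_sqrt_mult algebra_simps)
qed

lemma LR_acceleration: "t \<ge> 0 \<Longrightarrow> B t = lr_field (Y t) (W t)"
  unfolding lr_field_def using LR by (intro eq_neg_iff_add_eq_0[THEN iffD2]) (simp add: add.assoc)

lemma lr_field_lipschitz: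
  "norm (lr_field x v - lr_field y w) \<le> (2 * sqrt \<mu> + L) * norm (x - y, v - w)"
proof -
  have "lr_field x v - lr_field y w = - ((2 * sqrt \<mu>) *\<^sub>R (v - w) + (G x - G y))"
    by (simp add: lr_field_def algebra_simps)
  then have "norm (lr_field x v - lr_field y w) = norm ((2 * sqrt \<mu>) *\<^sub>R (v - w) + (G x - G y))"
    by (metis norm_minus_cancel)
  also have "\<dots> \<le> 2 * sqrt \<mu> * norm (v - w) + L * norm (x - y)"
    using norm_triangle_ineq[of "(2 * sqrt \<mu>) *\<^sub>R (v - w)" "G x - G y"] G_lipschitz[of x y] mu_pos
    by simp
  also have "\<dots> \<le> (2 * sqrt \<mu> + L) * norm (x - y, v - w)"
  proof -
    have "2 * sqrt \<mu> * norm (v - w) \<le> 2 * sqrt \<mu> * norm (x - y, v - w)"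
      using norm_snd_le[of "v - w" "x - y"] mu_pos by (simp add: mult_left_mono)
    moreover have "L * norm (x - y) \<le> L * norm (x - y, v - w)"
      using norm_fst_le[of "x - y" "v - w"] L_pos by simp
    ultimately show ?thesis by (simp add: distrib_right)
  qed
  finally show ?thesis .
qed

lemma norm_lr_field_le:
  "norm (lr_field x v) \<le> (2 * sqrt \<mu> + L) * norm (x - x0, v) + norm (G x0)"
  using lr_field_lipschitz[of x v x0 0] norm_triangle_ineq2[of "lr_field x v" "lr_field x0 0"]
  by (simp add: lr_field_def)

lemma norm_hr_correction_le:
  "norm (hr_correction x v) \<le> (1 + sqrt \<mu>) * L * norm (x - x0, v) + sqrt \<mu> * norm (G x0)"
proof -
  have "norm (\<beta> *\<^sub>R (H x *v v)) \<le> norm (H x *v v)"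
    using beta by (simp add: mult_left_le_one_le)
  also have "\<dots> \<le> L * norm v" by (rule H_bound)
  also have "\<dots> \<le> L * norm (x - x0, v)"
    using norm_snd_le[of v "x - x0"] L_pos by simp
  finally have "norm (\<beta> *\<^sub>R (H x *v v)) \<le> L * norm (x - x0, v)" .
  moreover have "norm (sqrt \<mu> *\<^sub>R G x) \<le> sqrt \<mu> * (L * norm (x - x0, v) + norm (G x0))"
  proof -
    have "norm (G x) \<le> L * norm (x - x0) + norm (G x0)"
      using G_lipschitz[of x x0] norm_triangle_ineq2[of "G x" "G x0"] by linarith
    also have "\<dots> \<le> L * norm (x - x0, v) + norm (G x0)"
      using norm_fst_le[of "x - x0" v] L_pos by simp
    finally show ?thesis using mu_pos by (simp add: mult_left_mono)
  qed
  ultimately show ?thesis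
    unfolding hr_correction_def
    using norm_triangle_ineq[of "\<beta> *\<^sub>R (H x *v v)" "sqrt \<mu> *\<^sub>R G x"]
    by (simp add: algebra_simps)
qed

lemma norm_HR_initial_velocity_le:
  assumes "s > 0"
  shows "norm (V s 0) \<le> 2 * sqrt s * norm (G x0)"
proof -
  have "norm (V s 0) = 2 * sqrt s / (1 + sqrt (\<mu> * s)) * norm (G x0)"
    using HR_init[OF assms] assms mu_pos by simp
  also have "\<dots> \<le> 2 * sqrt s / 1 * norm (G x0)"
    using assms mu_pos by (intro mult_right_mono divide_left_mono) (auto intro: add_pos_nonneg)
  finally show ?thesis by simp
qed

lemma norm_HR_acceleration_le:
  assumes "s \<in> {0<..1}" "t \<ge> 0"
  shows "norm (A s t) \<le> (2 * sqrt \<mu> + (2 + sqrt \<mu>) * L) * norm (X s t - x0, V s t)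
    + (1 + sqrt \<mu>) * norm (G x0)"
proof -
  let ?z = "norm (X s t - x0, V s t)"
  have "norm (A s t) \<le> norm (lr_field (X s t) (V s t)) + sqrt s * norm (hr_correction (X s t) (V s t))"
    using HR_acceleration[of s t] assms
      norm_triangle_ineq4[of _ "sqrt s *\<^sub>R hr_correction (X s t) (V s t)"]
    by simp
  also have "\<dots> \<le> ((2 * sqrt \<mu> + L) * ?z + norm (G x0)) + ((1 + sqrt \<mu>) * L * ?z + sqrt \<mu> * norm (G x0))"
  proof (rule add_mono)
    show "norm (lr_field (X s t) (V s t)) \<le> (2 * sqrt \<mu> + L) * ?z + norm (G x0)"
      by (rule norm_lr_field_le)
    have "sqrt s * norm (hr_correction (X s t) (V s t)) \<le> norm (hr_correction (X s t) (V s t))"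
      using assms by (simp add: mult_left_le_one_le)
    also have "\<dots> \<le> (1 + sqrt \<mu>) * L * ?z + sqrt \<mu> * norm (G x0)"
      by (rule norm_hr_correction_le)
    finally show "sqrt s * norm (hr_correction (X s t) (V s t)) \<le> \<dots>" .
  qed
  finally show ?thesis by (simp add: algebra_simps)
qed

lemma norm_HR_LR_acceleration_diff_le:
  assumes "s > 0" "t \<ge> 0" and bounded: "norm (X s t - x0, V s t) \<le> M"
  shows "norm (A s t - B t) \<le> (2 * sqrt \<mu> + L) * norm (X s t - Y t, V s t - W t)
    + sqrt s * ((1 + sqrt \<mu>) * L * M + sqrt \<mu> * norm (G x0))"
proof -
  have "A s t - B t = (lr_field (X s t) (V s t) - lr_field (Y t) (W t))
      - sqrt s *\<^sub>R hr_correction (X s t) (V s t)"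
    using HR_acceleration[of s t] LR_acceleration[of t] assms by simp
  then have "norm (A s t - B t) \<le> norm (lr_field (X s t) (V s t) - lr_field (Y t) (W t))
      + sqrt s * norm (hr_correction (X s t) (V s t))"
    using assms norm_triangle_ineq4[of _ "sqrt s *\<^sub>R hr_correction (X s t) (V s t)"] by simp
  also have "\<dots> \<le> (2 * sqrt \<mu> + L) * norm (X s t - Y t, V s t - W t)
      + sqrt s * ((1 + sqrt \<mu>) * L * M + sqrt \<mu> * norm (G x0))"
  proof (rule add_mono)
    show "norm (lr_field (X s t) (V s t) - lr_field (Y t) (W t))
        \<le> (2 * sqrt \<mu> + L) * norm (X s t - Y t, V s t - W t)"
      by (rule lr_field_lipschitz)
    have "norm (hr_correction (X s t) (V s t))
        \<le> (1 + sqrt \<mu>) * L * norm (X s t - x0, V s t) + sqrt \<mu> * norm (G x0)"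
      by (rule norm_hr_correction_le)
    also have "\<dots> \<le> (1 + sqrt \<mu>) * L * M + sqrt \<mu> * norm (G x0)"
      using bounded L_pos mu_pos by (simp add: mult_left_mono)
    finally show "sqrt s * norm (hr_correction (X s t) (V s t)) \<le> sqrt s * \<dots>"
      using \<open>s > 0\<close> by (simp add: mult_left_mono)
  qed
  finally show ?thesis .
qed

lemma HR_bounded:
  obtains M where "M \<ge> 0"
    and "\<And>s t. s \<in> {0<..<1} \<Longrightarrow> t \<in> {0..T} \<Longrightarrow> norm (X s t - x0, V s t) \<le> M"
proof
  define C where "C = 1 + 2 * sqrt \<mu> + (2 + sqrt \<mu>) * L"
  define k where "k = (1 + sqrt \<mu>) * norm (G x0)"
  have "C > 0" "k \<ge> 0" using L_pos mu_pos by (simp_all add: C_def k_def add_pos_nonneg)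
  then show "(2 * norm (G x0) + k/C) * exp (C*T) \<ge> 0" by simp
  fix s t :: real assume s: "s \<in> {0<..<1}" and t: "t \<in> {0..T}"
  show "norm (X s t - x0, V s t) \<le> (2 * norm (G x0) + k/C) * exp (C*T)"
  proof (rule gronwall_affine_le[OF \<open>C > 0\<close> \<open>k \<ge> 0\<close>,
        where Z = "\<lambda>t. (X s t - x0, V s t)" and Z' = "\<lambda>t. (V s t, A s t)"])
    fix t :: real assume "0 \<le> t" "t \<le> T"
    then show "((\<lambda>t. (X s t - x0, V s t)) has_vector_derivative (V s t, A s t)) (at t within {0..})"
      using HR[of s t] s by (auto intro!: derivative_eq_intros)
    show "norm (V s t, A s t) \<le> C * norm (X s t - x0, V s t) + k"
      using norm_Pair_le[of "V s t" "A s t"] norm_snd_le[of "V s t" "X s t - x0"]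
        norm_HR_acceleration_le[of s t] s \<open>0 \<le> t\<close>
      by (simp add: C_def k_def algebra_simps)
  next
    have "norm (V s 0) \<le> 2 * sqrt s * norm (G x0)"
      using s by (intro norm_HR_initial_velocity_le) simp
    also have "\<dots> \<le> 2 * norm (G x0)"
      using s by (simp add: mult_left_le_one_le)
    finally show "norm (X s 0 - x0, V s 0) \<le> 2 * norm (G x0)"
      using HR_init[of s] s by (simp add: norm_Pair)
  qed (use t in auto)
qed

lemma HR_LR_error:
  obtains D where "\<And>s t. s \<in> {0<..<1} \<Longrightarrow> t \<in> {0..T} \<Longrightarrow> norm (X s t - Y t) \<le> sqrt s * D"
proof -
  obtain M where "M \<ge> 0"
    and M: "\<And>s t. s \<in> {0<..<1} \<Longrightarrow> t \<in> {0..T} \<Longrightarrow> norm (X s t - x0, V s t) \<le> M"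
    using HR_bounded by blast
  define C where "C = 1 + 2 * sqrt \<mu> + L"
  define K where "K = (1 + sqrt \<mu>) * L * M + sqrt \<mu> * norm (G x0)"
  have "C > 0" "K \<ge> 0" using L_pos mu_pos \<open>M \<ge> 0\<close> by (simp_all add: C_def K_def add_pos_nonneg)
  have "norm (X s t - Y t, V s t - W t) \<le> (2 * sqrt s * norm (G x0) + sqrt s * K / C) * exp (C*T)"
    if s: "s \<in> {0<..<1}" and t: "t \<in> {0..T}" for s t
  proof (rule gronwall_affine_le[OF \<open>C > 0\<close>,
        where Z = "\<lambda>t. (X s t - Y t, V s t - W t)" and Z' = "\<lambda>t. (V s t - W t, A s t - B t)"])
    show "sqrt s * K \<ge> 0" using s \<open>K \<ge> 0\<close> by simp
    fix t :: real assume "0 \<le> t" "t \<le> T"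
    then show "((\<lambda>t. (X s t - Y t, V s t - W t)) has_vector_derivative (V s t - W t, A s t - B t))
        (at t within {0..})"
      using HR[of s t] LR[of t] s by (auto intro!: derivative_eq_intros)
    show "norm (V s t - W t, A s t - B t) \<le> C * norm (X s t - Y t, V s t - W t) + sqrt s * K"
      using norm_Pair_le[of "V s t - W t" "A s t - B t"] norm_snd_le[of "V s t - W t" "X s t - Y t"]
        norm_HR_LR_acceleration_diff_le[of s t M] M[of s t] s \<open>0 \<le> t\<close> \<open>t \<le> T\<close>
      by (simp add: C_def K_def algebra_simps)
  next
    show "norm (X s 0 - Y 0, V s 0 - W 0) \<le> 2 * sqrt s * norm (G x0)"
      using norm_HR_initial_velocity_le[of s] HR_init[of s] LR_init s by (simp add: norm_Pair)
  qed (use t in auto)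
  then have "norm (X s t - Y t) \<le> sqrt s * ((2 * norm (G x0) + K / C) * exp (C*T))"
    if "s \<in> {0<..<1}" "t \<in> {0..T}" for s t
    using that norm_fst_le[of "X s t - Y t" "V s t - W t"] by (fastforce simp: algebra_simps)
  then show ?thesis using that by blast
qed

end

theorem lemma3p4:
  fixes \<mu> L \<beta> :: real
    and f :: "real^'n \<Rightarrow> real" and G :: "real^'n \<Rightarrow> real^'n" and H :: "real^'n \<Rightarrow> real^'n^'n"
    and x0 :: "real^'n"
    and X V A :: "real \<Rightarrow> real \<Rightarrow> real^'n"
    and Y W B :: "real \<Rightarrow> real^'n"
  assumes "\<mu> > 0" "0 \<le> \<beta>" "\<beta> \<le> 1" "L \<ge> \<mu>"
    and "S2_class \<mu> L f G H"
    and HR_pos: "\<And>s t. s > 0 \<Longrightarrow> t \<ge> 0 \<Longrightarrow>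
           (X s has_vector_derivative V s t) (at t within {0..}) \<and>
           (V s has_vector_derivative A s t) (at t within {0..}) \<and>
           A s t + (2 * sqrt \<mu>) *\<^sub>R V s t + (\<beta> * sqrt s) *\<^sub>R (H (X s t) *v V s t)
             + (1 + sqrt (\<mu> * s)) *\<^sub>R G (X s t) = 0"
    and HR_init: "\<And>s. s > 0 \<Longrightarrow> X s 0 = x0 \<and>
           V s 0 = - ((2 * sqrt s) / (1 + sqrt (\<mu> * s))) *\<^sub>R G x0"
    and LR: "\<And>t. t \<ge> 0 \<Longrightarrow>
           (Y has_vector_derivative W t) (at t within {0..}) \<and>
           (W has_vector_derivative B t) (at t within {0..}) \<and>
           B t + (2 * sqrt \<mu>) *\<^sub>R W t + G (Y t) = 0"
    and LR_init: "Y 0 = x0" "W 0 = 0"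
    and "T > 0"
  shows "((\<lambda>s. SUP t\<in>{0..T}. norm (X s t - Y t)) \<longlongrightarrow> 0) (at_right 0)"
proof -
  have "L > 0" and G_lipschitz: "\<And>x y. norm (G x - G y) \<le> L * norm (x - y)"
    and "is_hessian G H"
    using assms(1,4,5) by (auto simp: S2_class_def)
  have H_bound: "norm (H x *v v) \<le> L * norm v" for x v
    using \<open>is_hessian G H\<close> G_lipschitz unfolding is_hessian_def
    by (blast intro: has_derivative_norm_le_lipschitz)
  interpret hr_lr_comparison \<mu> \<beta> L G H x0 X V A Y W B
    using assms(1-3) \<open>L > 0\<close> G_lipschitz H_bound HR_pos HR_init LR LR_init
    by unfold_locales auto
  obtain D where D: "\<And>s t. s \<in> {0<..<1} \<Longrightarrow> t \<in> {0..T} \<Longrightarrow> norm (X s t - Y t) \<le> sqrt s * D"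
    using HR_LR_error by blast
  show ?thesis
  proof (rule tendsto_SUP_norm_zero)
    show "{0..T} \<noteq> {}" using \<open>T > 0\<close> by simp
    show "eventually (\<lambda>s. \<forall>t\<in>{0..T}. norm (X s t - Y t) \<le> sqrt s * D) (at_right 0)"
      using eventually_at_right_real[OF zero_less_one] by eventually_elim (use D in blast)
    have "((\<lambda>s. sqrt s * D) \<longlongrightarrow> sqrt 0 * D) (at_right 0)"
      by (intro tendsto_intros)
    then show "((\<lambda>s. sqrt s * D) \<longlongrightarrow> 0) (at_right 0)" by simp
  qed
qed

end
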